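(* The integrality gap of the following odd path blocker LP for \textsc{$\{s,t\}$-OddPathEdgeBlocker} in undirected graphs is at least $2$: $$\min\Big\{\sum_{e\in E}c(e)x_e : \sum_{e\in P}x_e\ge 1 \text{ for every odd-length } s\text{-}t \text{ path } P \text{ in } G,\ x_e\ge 0\ \forall e\in E(G)\Big\}.$$ More precisely, for every $\varepsilon>0$ there is an undirected (multi)graph $G$ with distinct nodes $s,t$ and unit costs $c\equiv1$ for which the minimum size of an edge set meeting all odd $s$-$t$ paths is at least $(2-\varepsilon)$ times the LP optimum.
   Context: Paths are simple paths; odd-length means an odd number of edges. \textsc{$\{s,t\}$-OddPathEdgeBlocker}: given an undirected graph $G$ with distinct nodes $s,t$ and edge costs, find a minimum-cost set of edges meeting every odd $s$-$t$ path. *)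

theory Defs
  imports Main "HOL-Library.Multiset" Complex_Main
begin

text \<open>Parallel edges are distinct identifiers with the same endpoints.\<close>

definition multigraph :: "'v set \<Rightarrow> 'e set \<Rightarrow> ('e \<Rightarrow> 'v set) \<Rightarrow> bool" where
  "multigraph V E ends \<longleftrightarrow> finite V \<and> finite E \<and>
     (\<forall>e\<in>E. ends e \<subseteq> V \<and> card (ends e) = 2)"

definition st_path :: "'e set \<Rightarrow> ('e \<Rightarrow> 'v set) \<Rightarrow> 'v \<Rightarrow> 'v \<Rightarrow> 'v list \<Rightarrow> 'e list \<Rightarrow> bool" where
  "st_path E ends s t vs es \<longleftrightarrow>
     length vs = Suc (length es) \<and> hd vs = s \<and> last vs = t \<and> distinct vs \<and>
     set es \<subseteq> E \<and> (\<forall>i<length es. ends (es ! i) = {vs ! i, vs ! Suc i})"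

definition odd_st_path :: "'e set \<Rightarrow> ('e \<Rightarrow> 'v set) \<Rightarrow> 'v \<Rightarrow> 'v \<Rightarrow> 'v list \<Rightarrow> 'e list \<Rightarrow> bool" where
  "odd_st_path E ends s t vs es \<longleftrightarrow> st_path E ends s t vs es \<and> odd (length es)"

definition odd_path_blocker :: "'e set \<Rightarrow> ('e \<Rightarrow> 'v set) \<Rightarrow> 'v \<Rightarrow> 'v \<Rightarrow> 'e set \<Rightarrow> bool" where
  "odd_path_blocker E ends s t F \<longleftrightarrow> F \<subseteq> E \<and>
     (\<forall>vs es. odd_st_path E ends s t vs es \<longrightarrow> set es \<inter> F \<noteq> {})"

definition lp_feasible :: "'e set \<Rightarrow> ('e \<Rightarrow> 'v set) \<Rightarrow> 'v \<Rightarrow> 'v \<Rightarrow> ('e \<Rightarrow> real) \<Rightarrow> bool" where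
  "lp_feasible E ends s t x \<longleftrightarrow> (\<forall>e\<in>E. x e \<ge> 0) \<and>
     (\<forall>vs es. odd_st_path E ends s t vs es \<longrightarrow> (\<Sum>e\<in>set es. x e) \<ge> 1)"

definition lp_opt :: "'e set \<Rightarrow> ('e \<Rightarrow> 'v set) \<Rightarrow> 'v \<Rightarrow> 'v \<Rightarrow> ('e \<Rightarrow> real) \<Rightarrow> real" where
  "lp_opt E ends s t c = Inf {(\<Sum>e\<in>E. c e * x e) | x. lp_feasible E ends s t x}"

definition int_opt :: "'e set \<Rightarrow> ('e \<Rightarrow> 'v set) \<Rightarrow> 'v \<Rightarrow> 'v \<Rightarrow> ('e \<Rightarrow> real) \<Rightarrow> real" where
  "int_opt E ends s t c = Inf {(\<Sum>e\<in>F. c e) | F. odd_path_blocker E ends s t F}"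

end

theory Submission
  imports Defs "HOL-Library.Countable"
begin

text \<open>Take vertices \<open>s, t, u\<^sub>1, \<dots>, u\<^sub>n, w\<^sub>1, \<dots>, w\<^sub>n\<close>, a single rung \<open>u\<^sub>i w\<^sub>i\<close> for each \<open>i\<close>,
  and \<open>n\<close> parallel copies of each edge \<open>s u\<^sub>i\<close>, \<open>u\<^sub>i t\<close> and \<open>w\<^sub>i w\<^sub>j\<close> (\<open>i \<noteq> j\<close>).
  Off \<open>W = {w\<^sub>1, \<dots>, w\<^sub>n}\<close> the graph is bipartite with \<open>s, t\<close> on the same side, so an odd
  \<open>s\<close>-\<open>t\<close> path must enter and leave \<open>W\<close>, which it can only do along rungs: putting \<open>1/2\<close> on
  every rung is LP-feasible, of value \<open>n/2\<close>. An edge set with fewer than \<open>n - 1\<close> edges misses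
  two rungs \<open>u\<^sub>i w\<^sub>i\<close>, \<open>u\<^sub>j w\<^sub>j\<close> and one copy each of \<open>s u\<^sub>i\<close>, \<open>w\<^sub>i w\<^sub>j\<close>, \<open>u\<^sub>j t\<close>, so it misses the odd
  path \<open>s u\<^sub>i w\<^sub>i w\<^sub>j u\<^sub>j t\<close>. The gap is thus at least \<open>(n - 1)/(n/2) = 2 - 2/n\<close>.\<close>

definition crosses :: "('e \<Rightarrow> 'v set) \<Rightarrow> 'v set \<Rightarrow> 'e \<Rightarrow> bool" where
  "crosses ends W e \<longleftrightarrow> ends e \<inter> W \<noteq> {} \<and> \<not> ends e \<subseteq> W"

lemma st_path_distinct_edges:
  assumes "st_path E ends s t vs es"
  shows "distinct es"
  unfolding distinct_conv_nth
proof (intro allI impI)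
  fix p q assume p: "p < length es" and q: "q < length es" and "p \<noteq> q"
  have len: "length vs = Suc (length es)" and dist: "distinct vs"
    and ends: "\<And>i. i < length es \<Longrightarrow> ends (es ! i) = {vs ! i, vs ! Suc i}"
    using assms unfolding st_path_def by auto
  have vs_inj: "\<And>i j. i \<le> length es \<Longrightarrow> j \<le> length es \<Longrightarrow> vs ! i = vs ! j \<longleftrightarrow> i = j"
    using nth_eq_iff_index_eq[OF dist] len by (simp add: less_Suc_eq_le)
  show "es ! p \<noteq> es ! q"
  proof
    assume "es ! p = es ! q"
    then have "{vs ! p, vs ! Suc p} = {vs ! q, vs ! Suc q}"
      using ends p q by metis
    then show False
      using vs_inj p q \<open>p \<noteq> q\<close> by (auto simp: doubleton_eq_iff)
  qed
qed

lemma ex_crossing_index: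
  fixes P :: "nat \<Rightarrow> bool"
  assumes "a \<le> b" "P a" "\<not> P b"
  shows "\<exists>q. a \<le> q \<and> q < b \<and> P q \<and> \<not> P (Suc q)"
  using assms(1,3)
proof (induction b rule: nat_induct_at_least)
  case base
  then show ?case using assms(2) by simp
next
  case (Suc b)
  then show ?case by (metis less_Suc_eq)
qed

lemma alternating_parity:
  fixes g :: "nat \<Rightarrow> bool"
  assumes "\<forall>i<n. g (Suc i) \<noteq> g i"
  shows "g n \<longleftrightarrow> (g 0 \<noteq> odd n)"
  using assms by (induction n) auto

lemma st_path_two_crossing_edges:
  assumes path: "st_path E ends s t vs es"
    and "s \<notin> W" "t \<notin> W" "v \<in> set vs" "v \<in> W"
  shows "\<exists>e e'. e \<noteq> e' \<and> e \<in> set es \<and> e' \<in> set es \<and> crosses ends W e \<and> crosses ends W e'"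
proof -
  have len: "length vs = Suc (length es)"
    and ends: "\<And>i. i < length es \<Longrightarrow> ends (es ! i) = {vs ! i, vs ! Suc i}"
    using path unfolding st_path_def by auto
  have "vs \<noteq> []" using len by auto
  then have first: "vs ! 0 \<notin> W" and last: "vs ! length es \<notin> W"
    using path \<open>s \<notin> W\<close> \<open>t \<notin> W\<close> len unfolding st_path_def by (auto simp: hd_conv_nth last_conv_nth)
  obtain k where k: "k \<le> length es" "vs ! k \<in> W"
    using \<open>v \<in> set vs\<close> \<open>v \<in> W\<close> len by (metis in_set_conv_nth less_Suc_eq_le)
  obtain p where p: "p < k" "vs ! p \<notin> W" "vs ! Suc p \<in> W"
    using ex_crossing_index[of 0 k "\<lambda>i. vs ! i \<notin> W"] first k by auto
  obtain q where q: "k \<le> q" "q < length es" "vs ! q \<in> W" "vs ! Suc q \<notin> W"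
    using ex_crossing_index[of k "length es" "\<lambda>i. vs ! i \<in> W"] last k by auto
  have "crosses ends W (es ! p)" "crosses ends W (es ! q)"
    using ends p q k unfolding crosses_def by auto
  moreover have "es ! p \<noteq> es ! q"
    using st_path_distinct_edges[OF path] p q by (simp add: nth_eq_iff_index_eq)
  ultimately show ?thesis
    using p q k by (meson nth_mem order_less_le_trans)
qed

lemma st_path_avoiding_even:
  fixes col :: "'v \<Rightarrow> bool"
  assumes path: "st_path E ends s t vs es" and "set vs \<inter> W = {}"
    and proper: "\<forall>e\<in>E. \<forall>x\<in>ends e. \<forall>y\<in>ends e. x \<notin> W \<longrightarrow> y \<notin> W \<longrightarrow> x \<noteq> y \<longrightarrow> col x \<noteq> col y"
    and "col s = col t"
  shows "even (length es)"
proof -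
  have len: "length vs = Suc (length es)" and dist: "distinct vs"
    and edges: "set es \<subseteq> E"
    and ends: "\<And>i. i < length es \<Longrightarrow> ends (es ! i) = {vs ! i, vs ! Suc i}"
    using path unfolding st_path_def by auto
  have "vs \<noteq> []" using len by auto
  then have s: "vs ! 0 = s" and t: "vs ! length es = t"
    using path len unfolding st_path_def by (auto simp: hd_conv_nth last_conv_nth)
  have "\<forall>i<length es. col (vs ! Suc i) \<noteq> col (vs ! i)"
  proof (intro allI impI)
    fix i assume i: "i < length es"
    have "vs ! i \<in> set vs" "vs ! Suc i \<in> set vs"
      using i len by simp_all
    then have "vs ! i \<notin> W" "vs ! Suc i \<notin> W"
      using \<open>set vs \<inter> W = {}\<close> by blast+
    moreover have "vs ! i \<noteq> vs ! Suc i"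
      using nth_eq_iff_index_eq[OF dist] i len by simp
    moreover have "es ! i \<in> E" using edges i by auto
    ultimately show "col (vs ! Suc i) \<noteq> col (vs ! i)"
      using proper ends[OF i] by (metis insertCI)
  qed
  then have "col t \<longleftrightarrow> (col s \<noteq> odd (length es))"
    using alternating_parity[of "length es" "\<lambda>i. col (vs ! i)"] s t by simp
  then show ?thesis
    using \<open>col s = col t\<close> by blast
qed

lemma odd_st_path_two_crossing_edges:
  fixes col :: "'v \<Rightarrow> bool"
  assumes path: "odd_st_path E ends s t vs es" and "s \<notin> W" "t \<notin> W" "col s = col t"
    and proper: "\<forall>e\<in>E. \<forall>x\<in>ends e. \<forall>y\<in>ends e. x \<notin> W \<longrightarrow> y \<notin> W \<longrightarrow> x \<noteq> y \<longrightarrow> col x \<noteq> col y"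
  shows "\<exists>e e'. e \<noteq> e' \<and> e \<in> set es \<and> e' \<in> set es \<and> crosses ends W e \<and> crosses ends W e'"
proof -
  have st: "st_path E ends s t vs es" and "odd (length es)"
    using path unfolding odd_st_path_def by auto
  then obtain v where "v \<in> set vs" "v \<in> W"
    using st_path_avoiding_even[OF st _ proper \<open>col s = col t\<close>] by blast
  then show ?thesis
    using st_path_two_crossing_edges[OF st \<open>s \<notin> W\<close> \<open>t \<notin> W\<close>] by blast
qed

lemma odd_path_blocker_all_edges: "odd_path_blocker E ends s t E"
  unfolding odd_path_blocker_def
proof (intro conjI allI impI)
  fix vs es assume "odd_st_path E ends s t vs es"
  then have "set es \<subseteq> E" "es \<noteq> []"
    unfolding odd_st_path_def st_path_def by auto
  then show "set es \<inter> E \<noteq> {}" by (simp add: Int_absorb2)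
qed simp

lemma int_opt_ge:
  assumes "\<And>F. odd_path_blocker E ends s t F \<Longrightarrow> b \<le> (\<Sum>e\<in>F. c e)"
  shows "b \<le> int_opt E ends s t c"
  unfolding int_opt_def
proof (rule cInf_greatest)
  show "{\<Sum>e\<in>F. c e | F. odd_path_blocker E ends s t F} \<noteq> {}"
    using odd_path_blocker_all_edges[of E ends s t] by blast
qed (use assms in blast)

lemma lp_opt_le:
  assumes "lp_feasible E ends s t x" and "\<forall>e\<in>E. 0 \<le> c e"
  shows "lp_opt E ends s t c \<le> (\<Sum>e\<in>E. c e * x e)"
  unfolding lp_opt_def
proof (rule cInf_lower)
  show "bdd_below {(\<Sum>e\<in>E. c e * x e) | x. lp_feasible E ends s t x}"
    using assms(2) by (intro bdd_belowI[of _ 0]) (auto simp: lp_feasible_def intro!: sum_nonneg)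
qed (use assms(1) in blast)

lemma lp_opt_ge:
  assumes "lp_feasible E ends s t x"
    and "\<And>x. lp_feasible E ends s t x \<Longrightarrow> b \<le> (\<Sum>e\<in>E. c e * x e)"
  shows "b \<le> lp_opt E ends s t c"
  unfolding lp_opt_def
  using assms by (intro cInf_greatest) blast+

lemma lp_feasible_total_ge_1:
  assumes "finite E" "lp_feasible E ends s t x" "odd_st_path E ends s t vs es"
  shows "1 \<le> (\<Sum>e\<in>E. x e)"
proof -
  have "1 \<le> (\<Sum>e\<in>set es. x e)"
    using assms(2,3) unfolding lp_feasible_def by blast
  also have "\<dots> \<le> (\<Sum>e\<in>E. x e)"
    using assms unfolding lp_feasible_def odd_st_path_def st_path_def by (intro sum_mono2) auto
  finally show ?thesis .
qed

lemma ex_less_image_notin: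
  assumes "finite F" "card F < n" "inj_on f {..<n}"
  shows "\<exists>k<n. f k \<notin> F"
  using card_inj_on_le[OF assms(3) _ assms(1)] assms(2) by fastforce

datatype gap_edge = Rung nat | Source_Edge nat nat | Sink_Edge nat nat | Cross nat nat nat

instance gap_edge :: countable
  by countable_datatype

text \<open>Vertices are encoded as \<open>s = 0\<close>, \<open>t = 1\<close>, \<open>u\<^sub>i = 2i + 2\<close>, \<open>w\<^sub>i = 2i + 3\<close>; the last argument
  of \<open>Source_Edge\<close>, \<open>Sink_Edge\<close> and \<open>Cross\<close> numbers parallel copies.\<close>

fun gap_endpoints :: "gap_edge \<Rightarrow> nat set" where
  "gap_endpoints (Rung i) = {2*i+2, 2*i+3}"
| "gap_endpoints (Source_Edge i k) = {0, 2*i+2}"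
| "gap_endpoints (Sink_Edge i k) = {1, 2*i+2}"
| "gap_endpoints (Cross i j k) = {2*i+3, 2*j+3}"

definition gap_edges :: "nat \<Rightarrow> gap_edge set" where
  "gap_edges n = Rung ` {..<n}
     \<union> (\<lambda>(i, k). Source_Edge i k) ` ({..<n} \<times> {..<n})
     \<union> (\<lambda>(i, k). Sink_Edge i k) ` ({..<n} \<times> {..<n})
     \<union> (\<lambda>((i, j), k). Cross i j k) ` (({..<n} \<times> {..<n} - Id) \<times> {..<n})"

definition gap_E :: "nat \<Rightarrow> nat set" where
  "gap_E n = to_nat ` gap_edges n"

definition gap_ends :: "nat \<Rightarrow> nat set" where
  "gap_ends e = gap_endpoints (from_nat e)"

definition far_side :: "nat set" where
  "far_side = {v. odd v \<and> 3 \<le> v}"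

lemma gap_ends_to_nat [simp]: "gap_ends (to_nat l) = gap_endpoints l"
  by (simp add: gap_ends_def)

lemma gap_edges_iff [simp]:
  "Rung i \<in> gap_edges n \<longleftrightarrow> i < n"
  "Source_Edge i k \<in> gap_edges n \<longleftrightarrow> i < n \<and> k < n"
  "Sink_Edge i k \<in> gap_edges n \<longleftrightarrow> i < n \<and> k < n"
  "Cross i j k \<in> gap_edges n \<longleftrightarrow> i < n \<and> j < n \<and> k < n \<and> i \<noteq> j"
  unfolding gap_edges_def by force+

lemma to_nat_in_gap_E_iff [simp]: "to_nat l \<in> gap_E n \<longleftrightarrow> l \<in> gap_edges n"
  by (auto simp: gap_E_def)

lemma finite_gap_E: "finite (gap_E n)"
  by (simp add: gap_E_def gap_edges_def)

lemma gap_multigraph: "multigraph {..2*n+1} (gap_E n) gap_ends"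
  unfolding multigraph_def gap_E_def gap_edges_def by auto

lemma gap_crossing_edge_is_rung:
  assumes "e \<in> gap_E n" "crosses gap_ends far_side e"
  shows "\<exists>i<n. e = to_nat (Rung i)"
  using assms unfolding gap_E_def gap_edges_def crosses_def far_side_def by auto

lemma gap_proper_colouring:
  "\<forall>e\<in>gap_E n. \<forall>x\<in>gap_ends e. \<forall>y\<in>gap_ends e.
     x \<notin> far_side \<longrightarrow> y \<notin> far_side \<longrightarrow> x \<noteq> y \<longrightarrow> (2 \<le> x) \<noteq> (2 \<le> y)"
  unfolding gap_E_def gap_edges_def far_side_def by auto

lemma gap_odd_path_two_rungs:
  assumes "odd_st_path (gap_E n) gap_ends 0 1 vs es"
  shows "\<exists>i<n. \<exists>j<n. i \<noteq> j \<and> to_nat (Rung i) \<in> set es \<and> to_nat (Rung j) \<in> set es"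
proof -
  have "0 \<notin> far_side" "1 \<notin> far_side" by (simp_all add: far_side_def)
  then obtain e e' where "e \<noteq> e'" "e \<in> set es" "e' \<in> set es"
    "crosses gap_ends far_side e" "crosses gap_ends far_side e'"
    using odd_st_path_two_crossing_edges[OF assms _ _ _ gap_proper_colouring] by fastforce
  moreover have "set es \<subseteq> gap_E n"
    using assms unfolding odd_st_path_def st_path_def by blast
  ultimately show ?thesis
    using gap_crossing_edge_is_rung by (metis subsetD)
qed

lemma gap_odd_path:
  assumes "i < n" "j < n" "i \<noteq> j" "k\<^sub>1 < n" "k\<^sub>2 < n" "k\<^sub>3 < n"
  shows "odd_st_path (gap_E n) gap_ends 0 1 [0, 2*i+2, 2*i+3, 2*j+3, 2*j+2, 1]
           (map to_nat [Source_Edge i k\<^sub>1, Rung i, Cross i j k\<^sub>3, Rung j, Sink_Edge j k\<^sub>2])"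
proof -
  have "\<forall>m<5. gap_ends (map to_nat [Source_Edge i k\<^sub>1, Rung i, Cross i j k\<^sub>3, Rung j, Sink_Edge j k\<^sub>2] ! m)
      = {[0, 2*i+2, 2*i+3, 2*j+3, 2*j+2, 1] ! m, [0, 2*i+2, 2*i+3, 2*j+3, 2*j+2, 1] ! Suc m}"
    by (auto simp: less_Suc_eq numeral_eq_Suc insert_commute)
  then show ?thesis
    using assms unfolding odd_st_path_def st_path_def by simp
qed

definition half_on_rungs :: "nat \<Rightarrow> nat \<Rightarrow> real" where
  "half_on_rungs n e = (if e \<in> to_nat ` Rung ` {..<n} then 1/2 else 0)"

lemma gap_half_on_rungs_feasible: "lp_feasible (gap_E n) gap_ends 0 1 (half_on_rungs n)"
  unfolding lp_feasible_def
proof (intro conjI allI impI ballI)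
  fix vs es assume "odd_st_path (gap_E n) gap_ends 0 1 vs es"
  then obtain i j where ij: "i < n" "j < n" "i \<noteq> j" "to_nat (Rung i) \<in> set es" "to_nat (Rung j) \<in> set es"
    using gap_odd_path_two_rungs by blast
  have "1 = (\<Sum>e\<in>{to_nat (Rung i), to_nat (Rung j)}. half_on_rungs n e)"
    using ij by (simp add: half_on_rungs_def)
  also have "\<dots> \<le> (\<Sum>e\<in>set es. half_on_rungs n e)"
    using ij by (intro sum_mono2) (auto simp: half_on_rungs_def)
  finally show "1 \<le> (\<Sum>e\<in>set es. half_on_rungs n e)" .
qed (simp add: half_on_rungs_def)

lemma gap_half_on_rungs_value: "(\<Sum>e\<in>gap_E n. 1 * half_on_rungs n e) = real n / 2"
proof -
  have rungs: "to_nat ` Rung ` {..<n} \<subseteq> gap_E n"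
    unfolding gap_E_def gap_edges_def by blast
  have "(\<Sum>e\<in>gap_E n. 1 * half_on_rungs n e) = (\<Sum>e\<in>to_nat ` Rung ` {..<n}. 1/2)"
    unfolding half_on_rungs_def using finite_gap_E rungs
    by (simp add: sum.If_cases Int_absorb1)
  also have "\<dots> = real n / 2"
    by (simp add: card_image inj_on_def)
  finally show ?thesis .
qed

lemma inj_on_to_nat_gap_edge:
  "inj_on (\<lambda>k. to_nat (Rung k)) A"
  "inj_on (\<lambda>k. to_nat (Source_Edge i k)) A"
  "inj_on (\<lambda>k. to_nat (Sink_Edge i k)) A"
  "inj_on (\<lambda>k. to_nat (Cross i j k)) A"
  by (simp_all add: inj_on_def)

lemma gap_blocker_card:
  assumes "odd_path_blocker (gap_E n) gap_ends 0 1 F"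
  shows "n - 1 \<le> card F"
proof (rule ccontr)
  assume "\<not> n - 1 \<le> card F"
  moreover have fin: "finite F"
    using assms finite_gap_E unfolding odd_path_blocker_def by (blast intro: finite_subset)
  ultimately have small: "card F < n" "card (insert (to_nat (Rung i)) F) < n" for i
    by (auto simp: card_insert_if)
  obtain i where i: "i < n" "to_nat (Rung i) \<notin> F"
    using ex_less_image_notin[OF fin small(1) inj_on_to_nat_gap_edge(1)] by blast
  obtain j where j: "j < n" "to_nat (Rung j) \<notin> insert (to_nat (Rung i)) F"
    using ex_less_image_notin[OF _ small(2) inj_on_to_nat_gap_edge(1)] fin by blast
  obtain k\<^sub>1 where k\<^sub>1: "k\<^sub>1 < n" "to_nat (Source_Edge i k\<^sub>1) \<notin> F"
    using ex_less_image_notin[OF fin small(1) inj_on_to_nat_gap_edge(2)] by blast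
  obtain k\<^sub>2 where k\<^sub>2: "k\<^sub>2 < n" "to_nat (Sink_Edge j k\<^sub>2) \<notin> F"
    using ex_less_image_notin[OF fin small(1) inj_on_to_nat_gap_edge(3)] by blast
  obtain k\<^sub>3 where k\<^sub>3: "k\<^sub>3 < n" "to_nat (Cross i j k\<^sub>3) \<notin> F"
    using ex_less_image_notin[OF fin small(1) inj_on_to_nat_gap_edge(4)] by blast
  have "i \<noteq> j" using j by auto
  then have "set (map to_nat [Source_Edge i k\<^sub>1, Rung i, Cross i j k\<^sub>3, Rung j, Sink_Edge j k\<^sub>2]) \<inter> F \<noteq> {}"
    using gap_odd_path[OF i(1) j(1) _ k\<^sub>1(1) k\<^sub>2(1) k\<^sub>3(1)] assms unfolding odd_path_blocker_def by blast
  then show False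
    using i j k\<^sub>1 k\<^sub>2 k\<^sub>3 by auto
qed

lemma gap_lp_opt_bounds:
  assumes "2 \<le> n"
  shows "1 \<le> lp_opt (gap_E n) gap_ends 0 1 (\<lambda>_. 1)" "lp_opt (gap_E n) gap_ends 0 1 (\<lambda>_. 1) \<le> real n / 2"
proof -
  have "odd_st_path (gap_E n) gap_ends 0 1 [0, 2*0+2, 2*0+3, 2*1+3, 2*1+2, 1]
          (map to_nat [Source_Edge 0 0, Rung 0, Cross 0 1 0, Rung 1, Sink_Edge 1 0])"
    using assms by (intro gap_odd_path) auto
  then show "1 \<le> lp_opt (gap_E n) gap_ends 0 1 (\<lambda>_. 1)"
    using gap_half_on_rungs_feasible lp_feasible_total_ge_1[OF finite_gap_E]
    by (intro lp_opt_ge) auto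
  show "lp_opt (gap_E n) gap_ends 0 1 (\<lambda>_. 1) \<le> real n / 2"
    using lp_opt_le[OF gap_half_on_rungs_feasible[of n], where c = "\<lambda>_. 1"] gap_half_on_rungs_value[of n]
    by simp
qed

lemma gap_int_opt_ge: "real n - 1 \<le> int_opt (gap_E n) gap_ends 0 1 (\<lambda>_. 1)"
proof (rule int_opt_ge)
  fix F assume "odd_path_blocker (gap_E n) gap_ends 0 1 F"
  then have "n - 1 \<le> card F" by (rule gap_blocker_card)
  then show "real n - 1 \<le> (\<Sum>e\<in>F. 1)" by (simp; arith)
qed

lemma two_minus_mult_le:
  fixes \<epsilon> l x :: real
  assumes "0 < \<epsilon>" "2 / \<epsilon> \<le> x" "1 \<le> l" "l \<le> x / 2"
  shows "(2 - \<epsilon>) * l \<le> x - 1"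
proof (cases "\<epsilon> \<le> 2")
  case True
  have "(2 - \<epsilon>) * l \<le> (2 - \<epsilon>) * (x / 2)"
    using assms True by (intro mult_left_mono) auto
  also have "\<dots> \<le> x - 1"
    using assms by (simp add: field_simps)
  finally show ?thesis .
next
  case False
  then have "(2 - \<epsilon>) * l \<le> 0"
    using assms by (intro mult_nonpos_nonneg) auto
  moreover have "1 \<le> x"
    using assms by linarith
  ultimately show ?thesis by simp
qed

theorem lemma4p1:
  fixes \<epsilon> :: real
  assumes "\<epsilon> > 0"
  shows "\<exists>(V :: nat set) (E :: nat set) (ends :: nat \<Rightarrow> nat set) s t.
           multigraph V E ends \<and> s \<in> V \<and> t \<in> V \<and> s \<noteq> t \<and>
           lp_opt E ends s t (\<lambda>_. 1) > 0 \<and>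
           int_opt E ends s t (\<lambda>_. 1) \<ge> (2 - \<epsilon>) * lp_opt E ends s t (\<lambda>_. 1)"
proof -
  define n where "n = nat \<lceil>2 / \<epsilon>\<rceil> + 2"
  have "2 \<le> n" "2 / \<epsilon> \<le> real n"
    unfolding n_def by linarith+
  define lp where "lp = lp_opt (gap_E n) gap_ends 0 1 (\<lambda>_. 1)"
  have lp: "1 \<le> lp" "lp \<le> real n / 2"
    unfolding lp_def using gap_lp_opt_bounds[OF \<open>2 \<le> n\<close>] by auto
  have "(2 - \<epsilon>) * lp \<le> real n - 1"
    using two_minus_mult_le[OF assms \<open>2 / \<epsilon> \<le> real n\<close> lp] .
  then show ?thesis
    using gap_multigraph[of n] gap_int_opt_ge[of n] lp
    by (intro exI[of _ "{..2*n+1}"] exI[of _ "gap_E n"] exI[of _ gap_ends] exI[of _ 0] exI[of _ 1])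
      (auto simp: lp_def)
qed

end
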